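(* Let $G$ be a connected (finite, simple) graph, $\mathcal{F}$ a maximum induced forest of $G$, $S=V(G)\setminus V(\mathcal{F})$, $H$ the contracted graph, and $B$ a skeleton of $H$ with the maximum possible number of 2-edges among all skeletons (all as defined in the context). Let $L_S$ be the set of vertices of $S$ that are leaves of $B$ and $B_1=B[V(B)\setminus L_S]$. Then for each 1-edge $\overrightarrow{uv}$ of $B_1$ (directed from $u$ to its parent $v$), either $u$ is a tree vertex, or some child $u'$ of $u$ in $B_1$ is a tree vertex and $u'u$ is a 2-edge.
   Context: A maximum induced forest of $G$ is an induced forest of $G$ with the maximum number of vertices. Let $\mathcal{T}$ be the set of connected components (trees) of $\mathcal{F}$ and $S=V(G)\setminus V(\mathcal{F})$. The graph $H$ has vertex set $\{x_T : T\in\mathcal{T}\}\cup S$ (the $x_T$ are called tree vertices, the vertices of $S$ non-tree vertices) and edge set consisting of all edges of $G[S]$ together with all pairs $ux_T$ with $u\in S$, $T\in\mathcal{T}$ such that $u$ has at least one neighbor in $V(T)$ in $G$. An edge $ux_T$ of $H$ is a 2-edge if $u$ has at least two neighbors in $V(T)$ in $G$; all other edges of $H$ (including all edges with both endpoints in $S$) are 1-edges. A skeleton is a spanning tree of $H$ rooted at some tree vertex, with all edges directed towards the root (an in-arborescence). The parent of a non-root vertex is its unique out-neighbor; its children are its in-neighbors. *)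

theory Defs
  imports Main
begin

definition sgraph :: "'a set \<Rightarrow> ('a \<Rightarrow> 'a \<Rightarrow> bool) \<Rightarrow> bool" where
  "sgraph V E \<longleftrightarrow> finite V \<and> (\<forall>x y. E x y \<longrightarrow> x \<in> V \<and> y \<in> V)
     \<and> (\<forall>x y. E x y \<longrightarrow> E y x) \<and> (\<forall>x. \<not> E x x)"

definition restr :: "('a \<Rightarrow> 'a \<Rightarrow> bool) \<Rightarrow> 'a set \<Rightarrow> 'a \<Rightarrow> 'a \<Rightarrow> bool" where
  "restr E X = (\<lambda>x y. x \<in> X \<and> y \<in> X \<and> E x y)"

definition connected_graph :: "'a set \<Rightarrow> ('a \<Rightarrow> 'a \<Rightarrow> bool) \<Rightarrow> bool" where
  "connected_graph V E \<longleftrightarrow> V \<noteq> {} \<and> (\<forall>x\<in>V. \<forall>y\<in>V. (restr E V)\<^sup>*\<^sup>* x y)"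

definition is_cycle :: "('a \<Rightarrow> 'a \<Rightarrow> bool) \<Rightarrow> 'a list \<Rightarrow> bool" where
  "is_cycle E xs \<longleftrightarrow> 3 \<le> length xs \<and> distinct xs
     \<and> (\<forall>i. Suc i < length xs \<longrightarrow> E (xs ! i) (xs ! Suc i)) \<and> E (last xs) (hd xs)"

definition induced_forest :: "'a set \<Rightarrow> ('a \<Rightarrow> 'a \<Rightarrow> bool) \<Rightarrow> 'a set \<Rightarrow> bool" where
  "induced_forest V E F \<longleftrightarrow> F \<subseteq> V \<and> \<not> (\<exists>xs. set xs \<subseteq> F \<and> is_cycle E xs)"

definition max_induced_forest :: "'a set \<Rightarrow> ('a \<Rightarrow> 'a \<Rightarrow> bool) \<Rightarrow> 'a set \<Rightarrow> bool" where
  "max_induced_forest V E F \<longleftrightarrow> induced_forest V E F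
     \<and> (\<forall>F'. induced_forest V E F' \<longrightarrow> card F' \<le> card F)"

definition components :: "('a \<Rightarrow> 'a \<Rightarrow> bool) \<Rightarrow> 'a set \<Rightarrow> 'a set set" where
  "components E F = {{y. (restr E F)\<^sup>*\<^sup>* x y} | x. x \<in> F}"

text \<open>Contracted graph H: tree vertices are Inl T (T a component), non-tree vertices Inr u (u in S).\<close>
definition H_verts :: "'a set \<Rightarrow> ('a \<Rightarrow> 'a \<Rightarrow> bool) \<Rightarrow> 'a set \<Rightarrow> ('a set + 'a) set" where
  "H_verts V E F = Inl ` components E F \<union> Inr ` (V - F)"

definition H_adj :: "'a set \<Rightarrow> ('a \<Rightarrow> 'a \<Rightarrow> bool) \<Rightarrow> 'a set \<Rightarrow> ('a set + 'a) \<Rightarrow> ('a set + 'a) \<Rightarrow> bool" where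
  "H_adj V E F a b = (case (a, b) of
      (Inr u, Inr w) \<Rightarrow> u \<in> V - F \<and> w \<in> V - F \<and> E u w
    | (Inr u, Inl T) \<Rightarrow> u \<in> V - F \<and> T \<in> components E F \<and> (\<exists>t\<in>T. E u t)
    | (Inl T, Inr u) \<Rightarrow> u \<in> V - F \<and> T \<in> components E F \<and> (\<exists>t\<in>T. E u t)
    | (Inl _, Inl _) \<Rightarrow> False)"

definition two_edge :: "('a \<Rightarrow> 'a \<Rightarrow> bool) \<Rightarrow> ('a set + 'a) \<Rightarrow> ('a set + 'a) \<Rightarrow> bool" where
  "two_edge E a b = (case (a, b) of
      (Inr u, Inl T) \<Rightarrow> 2 \<le> card {t\<in>T. E u t}
    | (Inl T, Inr u) \<Rightarrow> 2 \<le> card {t\<in>T. E u t}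
    | _ \<Rightarrow> False)"

text \<open>Skeleton: spanning in-arborescence of H rooted at tree vertex r, given by its arc set P;
  (a,b) \<in> P means b is the parent of a.\<close>
definition skeleton :: "'a set \<Rightarrow> ('a \<Rightarrow> 'a \<Rightarrow> bool) \<Rightarrow> 'a set \<Rightarrow> ('a set + 'a)
    \<Rightarrow> (('a set + 'a) \<times> ('a set + 'a)) set \<Rightarrow> bool" where
  "skeleton V E F r P \<longleftrightarrow> r \<in> Inl ` components E F
     \<and> P \<subseteq> {(a, b). H_adj V E F a b}
     \<and> (\<forall>a\<in>H_verts V E F. a \<noteq> r \<longrightarrow> (\<exists>!b. (a, b) \<in> P))
     \<and> (\<forall>b. (r, b) \<notin> P)
     \<and> (\<forall>a\<in>H_verts V E F. (a, r) \<in> P\<^sup>*)"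

definition num_two_edges :: "('a \<Rightarrow> 'a \<Rightarrow> bool) \<Rightarrow> (('a set + 'a) \<times> ('a set + 'a)) set \<Rightarrow> nat" where
  "num_two_edges E P = card {(a, b) \<in> P. two_edge E a b}"

definition is_leaf :: "(('b \<times> 'b) set) \<Rightarrow> 'b \<Rightarrow> bool" where
  "is_leaf P a \<longleftrightarrow> card {b. (a, b) \<in> P \<or> (b, a) \<in> P} = 1"

definition leaves_S :: "'a set \<Rightarrow> ('a \<Rightarrow> 'a \<Rightarrow> bool) \<Rightarrow> 'a set \<Rightarrow> (('a set + 'a) \<times> ('a set + 'a)) set
    \<Rightarrow> ('a set + 'a) set" where
  "leaves_S V E F P = {a \<in> Inr ` (V - F). is_leaf P a}"

end

theory Submission
  imports Defs
begin

(* Let u = Inr u0 be a non-tree vertex.  By maximality of F, u0 has two neighbours in some tree T: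
   otherwise F + u0 would still induce a forest, because a cycle through u0 leaves and re-enters F
   through two neighbours of u0 that are joined by a path in F, hence lie in one tree.  So u x_T is
   a 2-edge of H.  If the conclusion failed, every edge of B at u would be a 1-edge (a child joined
   to u by a 2-edge is a tree vertex).  Re-rooting B at x_T keeps its edges and its number of
   2-edges; replacing the edge from u to its new parent by u x_T then gives a skeleton with one
   more 2-edge. *)

definition in_arborescence :: "'b set \<Rightarrow> ('b \<times> 'b) set \<Rightarrow> 'b \<Rightarrow> bool" where
  "in_arborescence W P r \<longleftrightarrow> r \<in> W \<and> P \<subseteq> W \<times> W
     \<and> (\<forall>a\<in>W. a \<noteq> r \<longrightarrow> (\<exists>!b. (a, b) \<in> P))
     \<and> (\<forall>b. (r, b) \<notin> P) \<and> (\<forall>a\<in>W. (a, r) \<in> P\<^sup>*)"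

lemma in_arborescence_parent_unique:
  "in_arborescence W P r \<Longrightarrow> (a, b) \<in> P \<Longrightarrow> (a, c) \<in> P \<Longrightarrow> b = c"
  unfolding in_arborescence_def by (metis SigmaD1 subsetD)

lemma in_arborescence_parent_exists:
  "in_arborescence W P r \<Longrightarrow> a \<in> W \<Longrightarrow> a \<noteq> r \<Longrightarrow> \<exists>b. (a, b) \<in> P"
  unfolding in_arborescence_def by blast

lemma in_arborescence_rtrancl_from_root:
  assumes "in_arborescence W P r" "(r, y) \<in> P\<^sup>*"
  shows "y = r"
  using assms(2) by (cases rule: converse_rtranclE) (use assms(1) in \<open>auto simp: in_arborescence_def\<close>)

lemma rtrancl_Diff_out_arc:
  assumes "(y, z) \<in> R\<^sup>*"
  shows "(y, x) \<in> (R - {(x, p)})\<^sup>* \<or> (y, z) \<in> (R - {(x, p)})\<^sup>*"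
  using assms
proof (induction rule: converse_rtrancl_induct)
  case base
  then show ?case by simp
next
  case (step y w)
  show ?case
  proof (cases "y = x")
    case False
    then have "(y, w) \<in> R - {(x, p)}" using step.hyps(1) by simp
    then show ?thesis using step.IH by (meson converse_rtrancl_into_rtrancl)
  qed simp
qed

lemma in_arborescence_reverse_root_arc:
  assumes A: "in_arborescence W P r" and ar: "(a, r) \<in> P"
  shows "in_arborescence W (P - {(a, r)} \<union> {(r, a)}) a"
proof -
  let ?P = "P - {(a, r)} \<union> {(r, a)}"
  have "a \<noteq> r" using A ar by (auto simp: in_arborescence_def)
  have "(a, b) \<notin> ?P" for b
    using in_arborescence_parent_unique[OF A ar] \<open>a \<noteq> r\<close> by blast
  moreover have "(x, a) \<in> ?P\<^sup>*" if "x \<in> W" for x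
  proof -
    have "(x, r) \<in> P\<^sup>*" using A that by (auto simp: in_arborescence_def)
    then have "(x, a) \<in> (P - {(a, r)})\<^sup>* \<or> (x, r) \<in> (P - {(a, r)})\<^sup>*"
      by (rule rtrancl_Diff_out_arc)
    moreover have "(P - {(a, r)})\<^sup>* \<subseteq> ?P\<^sup>*" by (rule rtrancl_mono) auto
    moreover have "(r, a) \<in> ?P\<^sup>*" by auto
    ultimately show ?thesis by (meson rtrancl_trans subsetD)
  qed
  moreover have "\<exists>!b. (x, b) \<in> ?P" if x: "x \<in> W" "x \<noteq> a" for x
  proof (cases "x = r")
    case True
    then show ?thesis using A by (auto simp: in_arborescence_def)
  next
    case False
    then obtain b where "(x, b) \<in> P" using in_arborescence_parent_exists[OF A x(1)] by blast
    then show ?thesis using x(2) False in_arborescence_parent_unique[OF A] by (intro ex1I[of _ b]) auto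
  qed
  moreover have "?P \<subseteq> W \<times> W" using A ar by (auto simp: in_arborescence_def)
  moreover have "a \<in> W" using A ar by (auto simp: in_arborescence_def)
  ultimately show ?thesis unfolding in_arborescence_def by simp
qed

lemma card_reverse_arc:
  assumes "(a, b) \<in> P" "(b, a) \<notin> P" "\<And>x y. t x y = t y x"
  shows "card {(x, y) \<in> P - {(a, b)} \<union> {(b, a)}. t x y} = card {(x, y) \<in> P. t x y}"
proof -
  define f where "f e = (if e = (a, b) then (b, a) else e)" for e
  have "inj_on f P" using assms(2) unfolding f_def inj_on_def by auto
  then have "inj_on f {(x, y) \<in> P. t x y}" by (rule inj_on_subset) auto
  moreover have "{(x, y) \<in> P - {(a, b)} \<union> {(b, a)}. t x y} = f ` {(x, y) \<in> P. t x y}"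
    using assms unfolding f_def by (auto simp: image_iff)
  ultimately show ?thesis by (simp add: card_image)
qed

lemma in_arborescence_reroot:
  assumes A: "in_arborescence W P r" and t: "\<And>x y. t x y = t y x" and "a \<in> W"
  shows "\<exists>P'. in_arborescence W P' a \<and> P' \<union> P'\<inverse> = P \<union> P\<inverse>
      \<and> card {(x, y) \<in> P'. t x y} = card {(x, y) \<in> P. t x y}"
proof -
  have "(a, r) \<in> P\<^sup>*" using A \<open>a \<in> W\<close> by (simp add: in_arborescence_def)
  then show ?thesis
  proof (induction rule: converse_rtrancl_induct)
    case base
    then show ?case using A by blast
  next
    case (step a a')
    then obtain P1 where P1: "in_arborescence W P1 a'" "P1 \<union> P1\<inverse> = P \<union> P\<inverse>"
      "card {(x, y) \<in> P1. t x y} = card {(x, y) \<in> P. t x y}" by blast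
    have "(a', a) \<notin> P1" using P1(1) by (auto simp: in_arborescence_def)
    moreover have "(a, a') \<in> P1 \<union> P1\<inverse>" using P1(2) step.hyps(1) by auto
    ultimately have "(a, a') \<in> P1" by auto
    let ?P2 = "P1 - {(a, a')} \<union> {(a', a)}"
    have "in_arborescence W ?P2 a"
      using P1(1) \<open>(a, a') \<in> P1\<close> by (rule in_arborescence_reverse_root_arc)
    moreover have "?P2 \<union> ?P2\<inverse> = P \<union> P\<inverse>" using P1(2) \<open>(a, a') \<in> P1\<close> by auto
    moreover have "card {(x, y) \<in> ?P2. t x y} = card {(x, y) \<in> P. t x y}"
      using card_reverse_arc[OF \<open>(a, a') \<in> P1\<close> \<open>(a', a) \<notin> P1\<close> t] P1(3) by simp
    ultimately show ?case by blast
  qed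
qed

lemma in_arborescence_change_parent:
  assumes A: "in_arborescence W P r" and xp: "(x, p) \<in> P"
    and b: "b \<in> W" "(b, x) \<notin> P\<^sup>*"
  shows "in_arborescence W (P - {(x, p)} \<union> {(x, b)}) r"
proof -
  let ?P = "P - {(x, p)} \<union> {(x, b)}"
  have x: "x \<in> W" "x \<noteq> r" using A xp by (auto simp: in_arborescence_def)
  have avoid: "(P - {(x, p)})\<^sup>* \<subseteq> ?P\<^sup>*" by (rule rtrancl_mono) auto
  have "(b, r) \<in> P\<^sup>*" using A b(1) by (simp add: in_arborescence_def)
  then have "(b, r) \<in> ?P\<^sup>*"
    using rtrancl_Diff_out_arc[of b r P x p] b(2) avoid rtrancl_mono[of "P - {(x, p)}" P] by blast
  have "(y, r) \<in> ?P\<^sup>*" if "y \<in> W" for y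
  proof -
    have "(y, r) \<in> P\<^sup>*" using A that by (simp add: in_arborescence_def)
    then have "(y, x) \<in> ?P\<^sup>* \<or> (y, r) \<in> ?P\<^sup>*"
      using rtrancl_Diff_out_arc[of y r P x p] avoid by blast
    moreover have "(x, r) \<in> ?P\<^sup>*"
      using \<open>(b, r) \<in> ?P\<^sup>*\<close> by (meson UnI2 converse_rtrancl_into_rtrancl singletonI)
    ultimately show ?thesis by (meson rtrancl_trans)
  qed
  moreover have "\<exists>!c. (y, c) \<in> ?P" if y: "y \<in> W" "y \<noteq> r" for y
  proof (cases "y = x")
    case True
    then show ?thesis using in_arborescence_parent_unique[OF A xp] by (intro ex1I[of _ b]) auto
  next
    case False
    obtain c where "(y, c) \<in> P" using in_arborescence_parent_exists[OF A y] by blast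
    then show ?thesis using False in_arborescence_parent_unique[OF A] by (intro ex1I[of _ c]) auto
  qed
  moreover have "?P \<subseteq> W \<times> W" using A x(1) b(1) by (auto simp: in_arborescence_def)
  moreover have "(r, c) \<notin> ?P" for c using A x(2) by (auto simp: in_arborescence_def)
  moreover have "r \<in> W" using A by (simp add: in_arborescence_def)
  ultimately show ?thesis unfolding in_arborescence_def by simp
qed

lemma in_arborescence_exchange_arc:
  assumes A: "in_arborescence W P r" and "finite W" and t: "\<And>x y. t x y = t y x"
    and "a \<in> W" "x \<in> W" "a \<noteq> x" "t a x"
    and no_t: "\<And>y. (a, y) \<in> P \<or> (y, a) \<in> P \<Longrightarrow> \<not> t a y"
  shows "\<exists>P'. in_arborescence W P' x \<and> P' \<subseteq> insert (a, x) (P \<union> P\<inverse>)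
      \<and> card {(p, q) \<in> P'. t p q} = Suc (card {(p, q) \<in> P. t p q})"
proof -
  obtain P1 where P1: "in_arborescence W P1 x" "P1 \<union> P1\<inverse> = P \<union> P\<inverse>"
      "card {(p, q) \<in> P1. t p q} = card {(p, q) \<in> P. t p q}"
    using in_arborescence_reroot[OF A, of t x] t \<open>x \<in> W\<close> by blast
  obtain y where y: "(a, y) \<in> P1"
    using in_arborescence_parent_exists[OF P1(1) \<open>a \<in> W\<close> \<open>a \<noteq> x\<close>] by blast
  have "\<not> t a y" using no_t y P1(2) by blast
  have "(x, a) \<notin> P1\<^sup>*" using in_arborescence_rtrancl_from_root[OF P1(1)] \<open>a \<noteq> x\<close> by blast
  define P2 where "P2 = P1 - {(a, y)} \<union> {(a, x)}"
  have "in_arborescence W P2 x"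
    unfolding P2_def using P1(1) y \<open>x \<in> W\<close> \<open>(x, a) \<notin> P1\<^sup>*\<close> by (rule in_arborescence_change_parent)
  moreover have "P2 \<subseteq> insert (a, x) (P \<union> P\<inverse>)" using P1(2) unfolding P2_def by blast
  moreover have "card {(p, q) \<in> P2. t p q} = Suc (card {(p, q) \<in> P. t p q})"
  proof -
    have "{(p, q) \<in> P2. t p q} = insert (a, x) {(p, q) \<in> P1. t p q}"
      using \<open>\<not> t a y\<close> \<open>t a x\<close> unfolding P2_def by auto
    moreover have "(a, x) \<notin> P1"
      using in_arborescence_parent_unique[OF P1(1) y] \<open>\<not> t a y\<close> \<open>t a x\<close> by blast
    moreover have "finite P1" using P1(1) \<open>finite W\<close> unfolding in_arborescence_def
      by (meson finite_SigmaI finite_subset)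
    then have "finite {(p, q) \<in> P1. t p q}" by (rule rev_finite_subset) auto
    ultimately show ?thesis using P1(3) by simp
  qed
  ultimately show ?thesis by blast
qed

lemma is_cycle_rotate1:
  assumes "is_cycle E xs"
  shows "is_cycle E (rotate1 xs)"
proof (cases xs)
  case Nil
  then show ?thesis using assms by (simp add: is_cycle_def)
next
  case (Cons x ys)
  have ys: "2 \<le> length ys" using assms Cons by (simp add: is_cycle_def)
  then have "ys \<noteq> []" by auto
  have step: "E (xs ! i) (xs ! Suc i)" if "Suc i < length xs" for i
    using assms that by (simp add: is_cycle_def)
  have "E ((ys @ [x]) ! i) ((ys @ [x]) ! Suc i)" if "Suc i < length (ys @ [x])" for i
  proof (cases "Suc i < length ys")
    case True
    then show ?thesis using step[of "Suc i"] Cons by (simp add: nth_append)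
  next
    case False
    then have "Suc i = length ys" using that by simp
    then have "i = length ys - 1" by simp
    then have "ys ! i = last xs" using Cons ys by (auto simp: last_conv_nth)
    then show ?thesis using assms Cons \<open>Suc i = length ys\<close> by (simp add: is_cycle_def nth_append)
  qed
  moreover have "E x (hd ys)" using step[of 0] Cons ys \<open>ys \<noteq> []\<close> by (simp add: hd_conv_nth)
  ultimately show ?thesis using assms Cons ys \<open>ys \<noteq> []\<close> by (simp add: is_cycle_def)
qed

lemma is_cycle_rotate: "is_cycle E xs \<Longrightarrow> is_cycle E (rotate n xs)"
  by (induction n) (simp_all add: is_cycle_rotate1)

lemma is_cycle_rotate_to_hd:
  assumes "is_cycle E xs" "u \<in> set xs"
  obtains zs where "is_cycle E (u # zs)" "set (u # zs) = set xs"
proof -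
  obtain n where "n < length xs" "xs ! n = u" using assms(2) by (meson in_set_conv_nth)
  moreover have "xs \<noteq> []" using assms(2) by auto
  ultimately have "hd (rotate n xs) = u" by (simp add: hd_rotate_conv_nth)
  moreover have "rotate n xs \<noteq> []" using assms(2) by auto
  ultimately have "rotate n xs = u # tl (rotate n xs)" by (metis list.collapse)
  then show ?thesis using that is_cycle_rotate[OF assms(1), of n] by (metis set_rotate)
qed

lemma walk_rtranclp_restr:
  assumes "xs \<noteq> []" "set xs \<subseteq> X" "\<forall>i. Suc i < length xs \<longrightarrow> E (xs ! i) (xs ! Suc i)"
  shows "(restr E X)\<^sup>*\<^sup>* (hd xs) (last xs)"
  using assms
proof (induction xs)
  case (Cons x ys)
  show ?case
  proof (cases ys)
    case (Cons y zs)
    have "restr E X x y" using Cons.prems(2,3) \<open>ys = y # zs\<close> by (force simp: restr_def)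
    moreover have "\<forall>i. Suc i < length ys \<longrightarrow> E (ys ! i) (ys ! Suc i)"
      using Cons.prems(3) by (metis Suc_less_eq length_Cons nth_Cons_Suc)
    then have "(restr E X)\<^sup>*\<^sup>* (hd ys) (last ys)" using Cons.IH Cons.prems(2) \<open>ys = y # zs\<close> by simp
    ultimately show ?thesis using \<open>ys = y # zs\<close> by simp
  qed simp
qed simp

lemma is_cycle_Cons_two_neighbours:
  assumes G: "sgraph V E" and cyc: "is_cycle E (u # zs)" and "set zs \<subseteq> F"
  shows "\<exists>T\<in>components E F. 2 \<le> card {t \<in> T. E u t}"
proof -
  have zs: "2 \<le> length zs" "distinct zs" using cyc by (auto simp: is_cycle_def)
  then have "zs \<noteq> []" by auto
  define a where "a = hd zs"
  define b where "b = last zs"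
  have "zs ! 0 \<noteq> zs ! (length zs - 1)" using zs by (subst nth_eq_iff_index_eq) auto
  then have "a \<noteq> b" unfolding a_def b_def using \<open>zs \<noteq> []\<close> by (simp add: hd_conv_nth last_conv_nth)
  have "a \<in> F" using \<open>set zs \<subseteq> F\<close> \<open>zs \<noteq> []\<close> unfolding a_def by auto
  have "E u a" using cyc \<open>zs \<noteq> []\<close> unfolding a_def is_cycle_def by (auto simp: hd_conv_nth)
  have "E u b" using cyc G \<open>zs \<noteq> []\<close> unfolding b_def is_cycle_def sgraph_def by simp
  have "\<forall>i. Suc i < length zs \<longrightarrow> E (zs ! i) (zs ! Suc i)"
    using cyc unfolding is_cycle_def by (metis Suc_less_eq length_Cons nth_Cons_Suc)
  then have "(restr E F)\<^sup>*\<^sup>* a b"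
    unfolding a_def b_def using walk_rtranclp_restr \<open>zs \<noteq> []\<close> \<open>set zs \<subseteq> F\<close> by blast
  define T where "T = {y. (restr E F)\<^sup>*\<^sup>* a y}"
  have "T \<in> components E F" unfolding T_def components_def using \<open>a \<in> F\<close> by blast
  moreover have "{a, b} \<subseteq> {t \<in> T. E u t}"
    using \<open>E u a\<close> \<open>E u b\<close> \<open>(restr E F)\<^sup>*\<^sup>* a b\<close> unfolding T_def by auto
  moreover have "finite {t \<in> T. E u t}"
    using G unfolding sgraph_def by (metis (no_types, lifting) mem_Collect_eq rev_finite_subset subsetI)
  ultimately show ?thesis using \<open>a \<noteq> b\<close> by (metis card_2_iff card_mono)
qed

lemma max_induced_forest_two_neighbours:
  assumes G: "sgraph V E" and M: "max_induced_forest V E F" and u: "u \<in> V - F"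
  shows "\<exists>T\<in>components E F. 2 \<le> card {t \<in> T. E u t}"
proof (rule ccontr)
  assume no_T: "\<not> ?thesis"
  have "F \<subseteq> V" using M by (simp add: max_induced_forest_def induced_forest_def)
  have "\<not> is_cycle E xs" if "set xs \<subseteq> insert u F" for xs
  proof
    assume cyc: "is_cycle E xs"
    show False
    proof (cases "u \<in> set xs")
      case True
      then obtain zs where zs: "is_cycle E (u # zs)" "set (u # zs) = set xs"
        using cyc by (blast elim: is_cycle_rotate_to_hd)
      then have "set zs \<subseteq> F" using that by (auto simp: is_cycle_def)
      then show False using is_cycle_Cons_two_neighbours[OF G zs(1)] no_T by blast
    next
      case False
      then show False using that cyc M by (auto simp: max_induced_forest_def induced_forest_def)
    qed
  qed
  then have "induced_forest V E (insert u F)" using \<open>F \<subseteq> V\<close> u by (auto simp: induced_forest_def)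
  then have "card (insert u F) \<le> card F" using M by (simp add: max_induced_forest_def)
  moreover have "finite F" using G \<open>F \<subseteq> V\<close> by (auto simp: sgraph_def intro: finite_subset)
  ultimately show False using u by simp
qed

lemma H_adj_sym: "sgraph V E \<Longrightarrow> H_adj V E F a b = H_adj V E F b a"
  by (cases a; cases b) (auto simp: H_adj_def sgraph_def)

lemma H_adj_in_H_verts: "H_adj V E F a b \<Longrightarrow> a \<in> H_verts V E F \<and> b \<in> H_verts V E F"
  by (cases a; cases b) (auto simp: H_adj_def H_verts_def)

lemma two_edge_commute: "two_edge E a b = two_edge E b a"
  by (cases a; cases b) (auto simp: two_edge_def)

lemma two_edge_InrD: "two_edge E (Inr x) b \<Longrightarrow> isl b"
  by (cases b) (auto simp: two_edge_def)

lemma leaves_S_not_isl: "a \<in> leaves_S V E F P \<Longrightarrow> \<not> isl a"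
  unfolding leaves_S_def by auto

lemma finite_H_verts:
  assumes "finite V" "F \<subseteq> V"
  shows "finite (H_verts V E F)"
proof -
  have "components E F = (\<lambda>x. {y. (restr E F)\<^sup>*\<^sup>* x y}) ` F" unfolding components_def by blast
  then show ?thesis using assms unfolding H_verts_def by (simp add: finite_subset)
qed

lemma skeleton_iff_in_arborescence:
  "skeleton V E F r P \<longleftrightarrow> r \<in> Inl ` components E F \<and> P \<subseteq> {(a, b). H_adj V E F a b}
     \<and> in_arborescence (H_verts V E F) P r"
proof -
  have "r \<in> Inl ` components E F \<Longrightarrow> r \<in> H_verts V E F" by (simp add: H_verts_def)
  moreover have "P \<subseteq> {(a, b). H_adj V E F a b} \<Longrightarrow> P \<subseteq> H_verts V E F \<times> H_verts V E F"
    using H_adj_in_H_verts by fast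
  ultimately show ?thesis unfolding skeleton_def in_arborescence_def by blast
qed

theorem corollary4:
  fixes V :: "'a set" and E :: "'a \<Rightarrow> 'a \<Rightarrow> bool" and F :: "'a set"
    and r :: "'a set + 'a" and P :: "(('a set + 'a) \<times> ('a set + 'a)) set"
  assumes "sgraph V E"
    and "connected_graph V E"
    and "max_induced_forest V E F"
    and "skeleton V E F r P"
    and "\<forall>r' P'. skeleton V E F r' P' \<longrightarrow> num_two_edges E P' \<le> num_two_edges E P"
    and "(u, v) \<in> P"
    and "u \<notin> leaves_S V E F P" and "v \<notin> leaves_S V E F P"
    and "\<not> two_edge E u v"
  shows "isl u \<or> (\<exists>u'. (u', u) \<in> P \<and> u' \<notin> leaves_S V E F P \<and> isl u' \<and> two_edge E u' u)"
proof (rule ccontr)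
  assume no_child: "\<not> ?thesis"
  then obtain u0 where u: "u = Inr u0" by (cases u) auto
  have B: "r \<in> Inl ` components E F" "P \<subseteq> {(a, b). H_adj V E F a b}"
    "in_arborescence (H_verts V E F) P r"
    using assms(4) by (simp_all add: skeleton_iff_in_arborescence)
  have "u0 \<in> V - F" using B(2) assms(6) u by (cases v) (auto simp: H_adj_def)
  then obtain T where T: "T \<in> components E F" "2 \<le> card {t \<in> T. E u0 t}"
    using max_induced_forest_two_neighbours[OF assms(1,3)] by blast
  have "{t \<in> T. E u0 t} \<noteq> {}" using T(2) by (metis card.empty not_numeral_le_zero)
  then have adj: "H_adj V E F u (Inl T)" and two: "two_edge E u (Inl T)"
    using T \<open>u0 \<in> V - F\<close> u by (auto simp: H_adj_def two_edge_def)
  have no_two: "\<not> two_edge E u y" if "(u, y) \<in> P \<or> (y, u) \<in> P" for y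
    using that assms(6,9) in_arborescence_parent_unique[OF B(3)] no_child u
    by (metis two_edge_InrD two_edge_commute leaves_S_not_isl)
  have "finite (H_verts V E F)"
    using assms(1,3) by (simp add: finite_H_verts sgraph_def max_induced_forest_def induced_forest_def)
  then obtain P' where P': "in_arborescence (H_verts V E F) P' (Inl T)"
      "P' \<subseteq> insert (u, Inl T) (P \<union> P\<inverse>)" "num_two_edges E P' = Suc (num_two_edges E P)"
    using in_arborescence_exchange_arc[OF B(3), of "two_edge E" u "Inl T"] two_edge_commute
      H_adj_in_H_verts[OF adj] u two no_two unfolding num_two_edges_def by fastforce
  have "P' \<subseteq> {(a, b). H_adj V E F a b}" using P'(2) B(2) adj H_adj_sym[OF assms(1)] by blast
  then have "skeleton V E F (Inl T) P'" using P'(1) T(1) by (simp add: skeleton_iff_in_arborescence)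
  then show False using assms(5) P'(3) by fastforce
qed

end
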